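(* Let $\pi\in S_n$ be a 321-avoiding permutation and let $i_1<i_2<\dots<i_r$ be its excedance locations (the indices $i$ with $\pi(i)>i$). Then the number of fixed points of $\pi$ is: (1) $n$, if $\pi$ is the identity; (2) $i_1-1+\sum_{j=2}^{r}\max\{i_j-\pi(i_{j-1})-1,0\}+n-\pi(i_r)$, if $\pi$ is not the identity.
   Context: A permutation $\pi$ of $[n]$ is 321-avoiding if there are no $i<j<k$ with $\pi(k)<\pi(j)<\pi(i)$. *)

theory Defs
  imports "HOL-Combinatorics.Permutations"
begin

text \<open>Permutations of [n] = {1..n} are functions p with p permutes {1..n}.\<close>

definition avoids321 :: "nat \<Rightarrow> (nat \<Rightarrow> nat) \<Rightarrow> bool" where
  "avoids321 n p \<longleftrightarrow>
     \<not> (\<exists>i j k. 1 \<le> i \<and> i < j \<and> j < k \<and> k \<le> n \<and> p k < p j \<and> p j < p i)"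

definition excedances :: "nat \<Rightarrow> (nat \<Rightarrow> nat) \<Rightarrow> nat set" where
  "excedances n p = {i \<in> {1..n}. p i > i}"

definition fixed_points :: "nat \<Rightarrow> (nat \<Rightarrow> nat) \<Rightarrow> nat set" where
  "fixed_points n p = {i \<in> {1..n}. p i = i}"

end

(* Call {e..p e} the arc of an excedance e.  In every permutation of {1..n} each
   non-fixed point lies on an arc: an excedance lies on its own arc, and if p k < k then,
   p being a bijection, some point below k is mapped to k or above.  In a 321-avoiding
   permutation no fixed point k lies on an arc: e < k < p e forces some b > k with
   p b < k, and e, k, b form a 321 pattern.  The same argument shows that p is increasing
   on the excedances, so the fixed points form the complement in {1..n} of a union of
   intervals whose left and right endpoints both increase, and counting that complement
   gap by gap gives the formula. *)
theory Submission
  imports Defs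
begin

lemma permutes_exists_enter:
  assumes "p permutes S" "finite S" "a \<in> S" "a \<in> A" "p a \<notin> A"
  shows "\<exists>b \<in> S - A. p b \<in> A"
proof (rule ccontr)
  assume "\<not> ?thesis"
  then have sub: "p ` (S - A) \<subseteq> S - A"
    using permutes_in_image[OF assms(1)] by auto
  have "inj_on p (S - A)"
    using permutes_inj_on[OF assms(1)] by (rule inj_on_subset) auto
  then have "p ` (S - A) = S - A"
    using sub assms(2) by (simp add: card_image card_subset_eq)
  moreover have "p a \<in> S - A"
    using assms permutes_in_image by fastforce
  ultimately obtain b where "b \<in> S - A" "p b = p a"
    by (metis imageE)
  then show False
    using assms(4) permutes_inj[OF assms(1)] by (metis DiffD2 injD)
qed

lemma excedance_covers_deficiency:
  assumes p: "p permutes {1..n}" and k: "k \<in> {1..n}" "p k < k"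
  shows "\<exists>e \<in> excedances n p. e < k \<and> k \<le> p e"
proof -
  have "\<exists>e \<in> {1..n} - {k..}. p e \<in> {k..}"
    using permutes_exists_enter[OF p finite_atLeastAtMost k(1), of "{k..}"] k(2) by simp
  then obtain e where "e \<in> {1..n}" "e < k" "k \<le> p e"
    by (metis DiffE atLeast_iff not_le)
  then show ?thesis
    unfolding excedances_def by fastforce
qed

lemma excedances_nonempty:
  assumes p: "p permutes {1..n}" and "p \<noteq> id"
  shows "excedances n p \<noteq> {}"
proof -
  obtain k where k: "p k \<noteq> k"
    using \<open>p \<noteq> id\<close> by (auto simp: fun_eq_iff)
  then have "k \<in> {1..n}"
    using permutes_not_in[OF p] by blast
  with k show ?thesis
    using excedance_covers_deficiency[OF p] unfolding excedances_def
    by (cases "p k < k") auto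
qed

lemma permutes_crossing_down:
  fixes p :: "nat \<Rightarrow> nat"
  assumes p: "p permutes {1..n}" and "e \<in> {1..n}" "e \<le> m" "m < p e"
  shows "\<exists>b. m < b \<and> b \<le> n \<and> p b \<le> m"
proof -
  have "\<exists>b \<in> {1..n} - {..m}. p b \<in> {..m}"
    using permutes_exists_enter[OF p finite_atLeastAtMost assms(2), of "{..m}"] assms(3,4)
    by simp
  then show ?thesis
    by (meson DiffE atLeastAtMost_iff atMost_iff not_le)
qed

lemma avoids321_excedance_mono:
  assumes p: "p permutes {1..n}" and "avoids321 n p"
    and e: "e \<in> excedances n p" "e' \<in> excedances n p" "e < e'"
  shows "p e \<le> p e'"
proof (rule ccontr)
  assume "\<not> ?thesis"
  moreover have "e \<in> {1..n}" "e' < p e'"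
    using e by (auto simp: excedances_def)
  ultimately obtain b where "e' < b" "b \<le> n" "p b \<le> e'"
    using permutes_crossing_down[OF p, of e e'] \<open>e < e'\<close> by auto
  then show False
    using \<open>avoids321 n p\<close> \<open>e \<in> {1..n}\<close> \<open>e < e'\<close> \<open>e' < p e'\<close> \<open>\<not> p e \<le> p e'\<close>
    unfolding avoids321_def by (metis atLeastAtMost_iff le_less_trans not_le)
qed

lemma avoids321_fixed_point_not_in_arc:
  assumes p: "p permutes {1..n}" and "avoids321 n p"
    and k: "k \<in> fixed_points n p" and e: "e \<in> excedances n p" "e \<le> k" "k \<le> p e"
  shows False
proof -
  have k': "k \<in> {1..n}" "p k = k" and e': "e \<in> {1..n}" "e < p e"
    using k e by (auto simp: fixed_points_def excedances_def)
  then have "e < k"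
    using e by (metis le_neq_implies_less not_le)
  then have "k < p e"
    using e(3) k' permutes_inj[OF p] by (metis injD le_neq_implies_less less_irrefl)
  then obtain b where b: "k < b" "b \<le> n" "p b \<le> k"
    using permutes_crossing_down[OF p e'(1) less_imp_le[OF \<open>e < k\<close>] \<open>k < p e\<close>] by blast
  moreover have "p b < p k"
    using b k' permutes_inj[OF p] by (metis injD le_neq_implies_less less_irrefl)
  ultimately show False
    using \<open>avoids321 n p\<close> e'(1) \<open>e < k\<close> \<open>k < p e\<close> k'(2)
    unfolding avoids321_def by (metis atLeastAtMost_iff)
qed

lemma avoids321_fixed_points_eq:
  assumes p: "p permutes {1..n}" and "avoids321 n p"
  shows "fixed_points n p = {1..n} - (\<Union>e \<in> excedances n p. {e..p e})"
proof
  show "fixed_points n p \<subseteq> {1..n} - (\<Union>e \<in> excedances n p. {e..p e})"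
  proof
    fix k assume k: "k \<in> fixed_points n p"
    then have "k \<in> {1..n}"
      by (simp add: fixed_points_def)
    moreover have "k \<notin> {e..p e}" if "e \<in> excedances n p" for e
      using avoids321_fixed_point_not_in_arc[OF assms k that] by (meson atLeastAtMost_iff)
    ultimately show "k \<in> {1..n} - (\<Union>e \<in> excedances n p. {e..p e})"
      by blast
  qed
next
  show "{1..n} - (\<Union>e \<in> excedances n p. {e..p e}) \<subseteq> fixed_points n p"
  proof
    fix k assume "k \<in> {1..n} - (\<Union>e \<in> excedances n p. {e..p e})"
    then have k: "k \<in> {1..n}" and uncovered: "\<And>e. e \<in> excedances n p \<Longrightarrow> k \<notin> {e..p e}"
      by auto
    have "\<not> k < p k"
    proof
      assume "k < p k"
      then have "k \<in> excedances n p"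
        using k by (simp add: excedances_def)
      then show False
        using uncovered[of k] \<open>k < p k\<close> by simp
    qed
    moreover have "\<not> p k < k"
    proof
      assume "p k < k"
      then obtain e where "e \<in> excedances n p" "e < k" "k \<le> p e"
        using excedance_covers_deficiency[OF p k] by blast
      then show False
        using uncovered by (meson atLeastAtMost_iff less_imp_le)
    qed
    ultimately show "k \<in> fixed_points n p"
      using k by (simp add: fixed_points_def)
  qed
qed

lemma sum_adjacent_Cons:
  "(\<Sum>j = 1..<length (x # y # ys). h ((x # y # ys) ! (j - 1)) ((x # y # ys) ! j))
   = h x y + (\<Sum>j = 1..<length (y # ys). h ((y # ys) ! (j - 1)) ((y # ys) ! j))"
  by (simp add: sum.atLeast_Suc_lessThan sum.atLeast_Suc_lessThan_Suc_shift del: sum.op_ivl_Suc)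

(* Truncated subtraction makes overlapping consecutive intervals contribute no gap. *)
lemma card_diff_Union_monotone_intervals:
  assumes "sorted_wrt (<) es" "sorted (map f es)" "\<forall>e \<in> set es. e \<le> f e \<and> f e \<le> n"
    and "es \<noteq> []" "lo \<le> Suc (f (hd es))"
  shows "card ({lo..n} - (\<Union>e \<in> set es. {e..f e}))
         = (hd es - lo) + (\<Sum>j = 1..<length es. es ! j - f (es ! (j - 1)) - 1) + (n - f (last es))"
  using assms
proof (induction es arbitrary: lo)
  case Nil
  then show ?case by simp
next
  case (Cons e es)
  show ?case
  proof (cases es)
    case Nil
    then have "{lo..n} - (\<Union>x \<in> set (e # es). {x..f x}) = {lo..<e} \<union> {Suc (f e)..n}"
      using Cons.prems by auto
    moreover have "card ({lo..<e} \<union> {Suc (f e)..n}) = card {lo..<e} + card {Suc (f e)..n}"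
      using Cons.prems by (intro card_Un_disjoint) auto
    ultimately show ?thesis
      using Nil by simp
  next
    case (Cons e' rest)
    let ?U = "\<Union>x \<in> set es. {x..f x}"
    have "{lo..n} - (\<Union>x \<in> set (e # es). {x..f x}) = {lo..<e} \<union> ({Suc (f e)..n} - ?U)"
      using Cons.prems by fastforce
    moreover have "card ({lo..<e} \<union> ({Suc (f e)..n} - ?U))
                   = card {lo..<e} + card ({Suc (f e)..n} - ?U)"
      using Cons.prems by (intro card_Un_disjoint) auto
    moreover have "card ({Suc (f e)..n} - ?U)
        = (e' - Suc (f e)) + (\<Sum>j = 1..<length es. es ! j - f (es ! (j - 1)) - 1) + (n - f (last es))"
      using Cons.IH[of "Suc (f e)"] Cons.prems \<open>es = e' # rest\<close> by simp
    moreover have "(\<Sum>j = 1..<length (e # es). (e # es) ! j - f ((e # es) ! (j - 1)) - 1)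
        = (e' - f e - 1) + (\<Sum>j = 1..<length es. es ! j - f (es ! (j - 1)) - 1)"
      unfolding \<open>es = e' # rest\<close> by (rule sum_adjacent_Cons)
    ultimately show ?thesis
      using \<open>es = e' # rest\<close> by (simp only: card_atLeastLessThan list.sel(1) last_ConsR) simp
  qed
qed

lemma avoids321_sorted_excedance_values:
  assumes "p permutes {1..n}" and "avoids321 n p"
  shows "sorted (map p (sorted_list_of_set (excedances n p)))"
proof -
  have "sorted_wrt (<) (sorted_list_of_set (excedances n p))"
    by simp
  then show ?thesis
    unfolding sorted_wrt_map
    by (rule sorted_wrt_mono_rel[rotated])
      (use avoids321_excedance_mono[OF assms] in \<open>auto simp: excedances_def\<close>)
qed

lemma avoids321_card_fixed_points:
  assumes p: "p permutes {1..n}" and "avoids321 n p" and "p \<noteq> id"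
  defines "ex \<equiv> sorted_list_of_set (excedances n p)"
  shows "card (fixed_points n p)
    = (hd ex - 1) + (\<Sum>j = 1..<length ex. ex ! j - p (ex ! (j - 1)) - 1) + (n - p (last ex))"
proof -
  have set_ex: "set ex = excedances n p"
    unfolding ex_def excedances_def by simp
  have "card ({1..n} - (\<Union>e \<in> set ex. {e..p e}))
    = (hd ex - 1) + (\<Sum>j = 1..<length ex. ex ! j - p (ex ! (j - 1)) - 1) + (n - p (last ex))"
  proof (rule card_diff_Union_monotone_intervals)
    show "sorted_wrt (<) ex" "sorted (map p ex)"
      using avoids321_sorted_excedance_values[OF p \<open>avoids321 n p\<close>] by (simp_all add: ex_def)
    show "\<forall>e \<in> set ex. e \<le> p e \<and> p e \<le> n"
      using set_ex permutes_in_image[OF p] by (auto simp: excedances_def)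
    show "ex \<noteq> []"
      using set_ex excedances_nonempty[OF p \<open>p \<noteq> id\<close>] by auto
  qed simp
  then show ?thesis
    using avoids321_fixed_points_eq[OF p \<open>avoids321 n p\<close>] set_ex by simp
qed

theorem mainTheorem12:
  fixes n :: nat and p :: "nat \<Rightarrow> nat"
  assumes "p permutes {1..n}" and "avoids321 n p"
  defines "ex \<equiv> sorted_list_of_set (excedances n p)"
  defines "r \<equiv> length ex"
  shows "(p = id \<longrightarrow> card (fixed_points n p) = n)
       \<and> (p \<noteq> id \<longrightarrow>
            int (card (fixed_points n p)) =
              int (ex ! 0) - 1
              + (\<Sum>j = 1..<r. max (int (ex ! j) - int (p (ex ! (j - 1))) - 1) 0)
              + int n - int (p (ex ! (r - 1))))"
proof (intro conjI impI)
  assume "p = id"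
  then have "fixed_points n p = {1..n}"
    by (auto simp: fixed_points_def)
  then show "card (fixed_points n p) = n"
    by simp
next
  assume "p \<noteq> id"
  then have "ex \<noteq> []" and "set ex = excedances n p"
    using excedances_nonempty[OF assms(1)] unfolding ex_def excedances_def by auto
  then have "1 \<le> ex ! 0" "p (ex ! (r - 1)) \<le> n"
    using nth_mem[of 0 ex] nth_mem[of "r - 1" ex] permutes_in_image[OF assms(1)]
    by (auto simp: excedances_def r_def)
  moreover have "hd ex = ex ! 0" "last ex = ex ! (r - 1)"
    using \<open>ex \<noteq> []\<close> by (simp_all add: hd_conv_nth last_conv_nth r_def)
  moreover have "int (\<Sum>j = 1..<r. ex ! j - p (ex ! (j - 1)) - 1)
      = (\<Sum>j = 1..<r. max (int (ex ! j) - int (p (ex ! (j - 1))) - 1) 0)"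
    unfolding of_nat_sum by (intro sum.cong) auto
  ultimately show "int (card (fixed_points n p)) =
              int (ex ! 0) - 1
              + (\<Sum>j = 1..<r. max (int (ex ! j) - int (p (ex ! (j - 1))) - 1) 0)
              + int n - int (p (ex ! (r - 1)))"
    using avoids321_card_fixed_points[OF assms(1,2) \<open>p \<noteq> id\<close>]
    by (simp only: ex_def [symmetric] r_def [symmetric] of_nat_add of_nat_diff)
qed

end
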